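(* Let $S,T$ be semigroups and $f:S\to T$ a surjective semigroup homomorphism. If $S$ is an inverse semigroup whose semilattice of idempotents $E(S)$ is well-founded, then $T$ is an inverse semigroup whose semilattice of idempotents $E(T)$ is well-founded.
   Context: An inverse semigroup is a semigroup in which every element $a$ has a unique $b$ with $aba=a$ and $bab=b$. Its idempotents $E(S)$ form a commutative subsemigroup (semilattice) ordered by $e\le f$ iff $ef=e$; it is well-founded if every nonempty subset has a minimal element. *)

theory Defs
  imports Main
begin

definition inverse_semigroup :: "('a \<Rightarrow> 'a \<Rightarrow> 'a) \<Rightarrow> bool" where
  "inverse_semigroup m \<longleftrightarrow> semigroup m \<and>
     (\<forall>a. \<exists>!b. m (m a b) a = a \<and> m (m b a) b = b)"

definition idempotents :: "('a \<Rightarrow> 'a \<Rightarrow> 'a) \<Rightarrow> 'a set" where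
  "idempotents m = {e. m e e = e}"

definition idem_le :: "('a \<Rightarrow> 'a \<Rightarrow> 'a) \<Rightarrow> 'a \<Rightarrow> 'a \<Rightarrow> bool" where
  "idem_le m e f \<longleftrightarrow> m e f = e"

definition idempotents_wf :: "('a \<Rightarrow> 'a \<Rightarrow> 'a) \<Rightarrow> bool" where
  "idempotents_wf m \<longleftrightarrow>
     (\<forall>A. A \<subseteq> idempotents m \<longrightarrow> A \<noteq> {} \<longrightarrow>
        (\<exists>x\<in>A. \<forall>y\<in>A. idem_le m y x \<longrightarrow> y = x))"

end

theory Submission
  imports Defs
begin

text \<open>An inverse semigroup is exactly a regular semigroup whose idempotents commute. Both
  properties pass to homomorphic images, because every idempotent of the image of a regular
  semigroup lifts to an idempotent. Lifting also transfers well-foundedness: given idempotents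
  \<open>f g \<le> f e\<close> with \<open>e\<close> minimal among the lifts, the idempotent \<open>g e \<le> e\<close> is again a lift of \<open>f g\<close>,
  so \<open>g e = e\<close>.\<close>

definition regular_semigroup :: "('a \<Rightarrow> 'a \<Rightarrow> 'a) \<Rightarrow> bool" where
  "regular_semigroup m \<longleftrightarrow> semigroup m \<and>
     (\<forall>a. \<exists>b. m (m a b) a = a \<and> m (m b a) b = b)"

lemma inverse_semigroup_imp_regular:
  "inverse_semigroup m \<Longrightarrow> regular_semigroup m"
  unfolding inverse_semigroup_def regular_semigroup_def by blast

lemma inverse_semigroup_inverse_unique:
  assumes "inverse_semigroup m"
    and "m (m a b) a = a" "m (m b a) b = b" "m (m a c) a = a" "m (m c a) c = c"
  shows "b = c"
  using assms unfolding inverse_semigroup_def by blast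

lemma inverse_semigroup_mult_idempotent:
  assumes I: "inverse_semigroup m" and u: "m u u = u" and v: "m v v = v"
  shows "m (m u v) (m u v) = m u v"
proof -
  have A: "\<And>x y z. m (m x y) z = m x (m y z)"
    using I unfolding inverse_semigroup_def by (simp add: semigroup.assoc)
  obtain x where x1: "m (m (m u v) x) (m u v) = m u v" and x2: "m (m x (m u v)) x = x"
    using I unfolding inverse_semigroup_def by blast
  \<comment> \<open>\<open>v x u\<close> is a second inverse of \<open>u v\<close>, and it is idempotent\<close>
  define y where "y = m v (m x u)"
  have y1: "m (m (m u v) y) (m u v) = m u v"
  proof -
    have "m (m (m u v) y) (m u v) = m u (m (m v v) (m x (m (m u u) v)))"
      by (simp add: y_def A)
    also have "\<dots> = m u v" using u v x1 by (simp add: A)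
    finally show ?thesis .
  qed
  have yy: "m y y = y"
  proof -
    have "m y y = m v (m (m (m x (m u v)) x) u)"
      by (simp add: y_def A u v flip: A[of u u v] A[of v v])
    also have "\<dots> = y" using x2 by (simp add: y_def A)
    finally show ?thesis .
  qed
  have y2: "m (m y (m u v)) y = y"
  proof -
    have "m (m y (m u v)) y = m v (m (m (m x (m u v)) x) u)"
      by (simp add: y_def A u v flip: A[of u u v] A[of v v])
    also have "\<dots> = y" using x2 by (simp add: y_def A)
    finally show ?thesis .
  qed
  have "x = y" using inverse_semigroup_inverse_unique[OF I x1 x2 y1 y2] .
  with x1 x2 yy have "m u v = x"
    using inverse_semigroup_inverse_unique[OF I, of x "m u v" x] by simp
  with yy \<open>x = y\<close> show ?thesis by simp
qed

lemma inverse_semigroup_idempotents_commute: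
  assumes I: "inverse_semigroup m" and e: "m e e = e" and g: "m g g = g"
  shows "m e g = m g e"
proof -
  have A: "\<And>x y z. m (m x y) z = m x (m y z)"
    using I unfolding inverse_semigroup_def by (simp add: semigroup.assoc)
  have eg: "m (m e g) (m e g) = m e g" and ge: "m (m g e) (m g e) = m g e"
    using inverse_semigroup_mult_idempotent[OF I] e g by blast+
  \<comment> \<open>both \<open>e g\<close> and \<open>g e\<close> are inverses of the idempotent \<open>e g\<close>\<close>
  have 1: "m (m (m e g) (m g e)) (m e g) = m e g"
  proof -
    have "m (m (m e g) (m g e)) (m e g) = m (m e (m g g)) (m e (m e g))" by (simp add: A)
    also have "\<dots> = m (m e g) (m e g)" using e g by (simp add: A flip: A[of e e])
    finally show ?thesis using eg by simp
  qed
  have 2: "m (m (m g e) (m e g)) (m g e) = m g e"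
  proof -
    have "m (m (m g e) (m e g)) (m g e) = m (m g (m e e)) (m g (m g e))" by (simp add: A)
    also have "\<dots> = m (m g e) (m g e)" using e g by (simp add: A flip: A[of g g])
    finally show ?thesis using ge by simp
  qed
  have 3: "m (m (m e g) (m e g)) (m e g) = m e g" using eg by simp
  show ?thesis using inverse_semigroup_inverse_unique[OF I 3 3 1 2] .
qed

lemma regular_semigroup_commuting_idempotents_imp_inverse:
  assumes R: "regular_semigroup m"
    and C: "\<And>e g. m e e = e \<Longrightarrow> m g g = g \<Longrightarrow> m e g = m g e"
  shows "inverse_semigroup m"
proof -
  have A: "\<And>x y z. m (m x y) z = m x (m y z)"
    using R unfolding regular_semigroup_def by (simp add: semigroup.assoc)
  have unique: "x = y"
    if x: "m (m b x) b = b" "m (m x b) x = x" and y: "m (m b y) b = b" "m (m y b) y = y"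
    for b x y
  proof -
    have ix: "m (m x b) (m x b) = m x b" "m (m b x) (m b x) = m b x"
      using x by (metis A)+
    have iy: "m (m y b) (m y b) = m y b" "m (m b y) (m b y) = m b y"
      using y by (metis A)+
    have "x = m (m x b) (m (m y b) x)" using x y by (metis A)
    also have "\<dots> = m (m y b) (m (m x b) x)" using C[OF ix(1) iy(1)] by (metis A)
    also have "\<dots> = m y (m b x)" using x by (metis A)
    finally have x_eq: "x = m y (m b x)" .
    have "y = m y (m (m b x) (m b y))" using x y by (metis A)
    also have "\<dots> = m y (m (m b y) (m b x))" using C[OF ix(2) iy(2)] by simp
    also have "\<dots> = m y (m b x)" using y by (metis A)
    finally show ?thesis using x_eq by simp
  qed
  show ?thesis
    unfolding inverse_semigroup_def
  proof (intro conjI allI)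
    show "semigroup m" using R unfolding regular_semigroup_def by blast
    fix a
    obtain b where "m (m a b) a = a \<and> m (m b a) b = b"
      using R unfolding regular_semigroup_def by blast
    then show "\<exists>!b. m (m a b) a = a \<and> m (m b a) b = b"
      using unique by blast
  qed
qed

lemma regular_semigroup_hom_image:
  assumes R: "regular_semigroup mS" and T: "semigroup mT"
    and H: "\<forall>x y. f (mS x y) = mT (f x) (f y)" and "surj f"
  shows "regular_semigroup mT"
  unfolding regular_semigroup_def
proof (intro conjI allI)
  fix b
  obtain a where a: "b = f a" using \<open>surj f\<close> by (metis surjD)
  obtain c where "mS (mS a c) a = a" "mS (mS c a) c = c"
    using R unfolding regular_semigroup_def by blast
  then show "\<exists>c. mT (mT b c) b = b \<and> mT (mT c b) c = c"
    using H a by metis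
qed (fact T)

text \<open>If \<open>b\<close> is an inverse of \<open>a a\<close>, then \<open>a b a\<close> is an idempotent with the same image as \<open>a\<close>.\<close>
lemma regular_semigroup_hom_lift_idempotent:
  assumes R: "regular_semigroup mS"
    and H: "\<forall>x y. f (mS x y) = mT (f x) (f y)"
    and e: "mT (f a) (f a) = f a"
  shows "\<exists>g. mS g g = g \<and> f g = f a"
proof -
  have A: "\<And>x y z. mS (mS x y) z = mS x (mS y z)"
    using R unfolding regular_semigroup_def by (simp add: semigroup.assoc)
  obtain b where b1: "mS (mS (mS a a) b) (mS a a) = mS a a"
    and b2: "mS (mS b (mS a a)) b = b"
    using R unfolding regular_semigroup_def by blast
  define g where "g = mS a (mS b a)"
  have "mS g g = mS a (mS (mS (mS b (mS a a)) b) a)" by (simp add: g_def A)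
  also have "\<dots> = g" using b2 by (simp add: g_def)
  finally have gg: "mS g g = g" .
  have "mT (mT (mT (f a) (f a)) (f b)) (mT (f a) (f a)) = mT (f a) (f a)"
    using arg_cong[OF b1, of f] H by simp
  then have fb: "mT (mT (f a) (f b)) (f a) = f a" using e by simp
  have "f g = mT (f a) (mT (f b) (f a))" using H by (simp add: g_def)
  also have "\<dots> = f a" using fb H A by metis
  finally show ?thesis using gg by blast
qed

lemma idempotents_wf_hom_image:
  assumes I: "inverse_semigroup mS" and W: "idempotents_wf mS"
    and H: "\<forall>x y. f (mS x y) = mT (f x) (f y)"
    and lift: "\<And>t. mT t t = t \<Longrightarrow> \<exists>g. mS g g = g \<and> f g = t"
  shows "idempotents_wf mT"
  unfolding idempotents_wf_def
proof (intro allI impI)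
  fix A assume AE: "A \<subseteq> idempotents mT" and "A \<noteq> {}"
  define B where "B = {e. mS e e = e \<and> f e \<in> A}"
  have "B \<subseteq> idempotents mS" unfolding B_def idempotents_def by blast
  moreover have "B \<noteq> {}"
    using \<open>A \<noteq> {}\<close> AE lift unfolding B_def idempotents_def by blast
  ultimately obtain e where "e \<in> B" and e_min: "\<forall>y\<in>B. idem_le mS y e \<longrightarrow> y = e"
    using W unfolding idempotents_wf_def by blast
  then have ee: "mS e e = e" and "f e \<in> A" unfolding B_def by blast+
  show "\<exists>x\<in>A. \<forall>y\<in>A. idem_le mT y x \<longrightarrow> y = x"
  proof (intro bexI ballI impI)
    fix y assume "y \<in> A" and le: "idem_le mT y (f e)"
    then have "mT y y = y" using AE unfolding idempotents_def by blast
    then obtain g where g: "mS g g = g" "f g = y" using lift by blast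
    have AS: "\<And>x y z. mS (mS x y) z = mS x (mS y z)"
      using I unfolding inverse_semigroup_def by (simp add: semigroup.assoc)
    have "mS (mS g e) (mS g e) = mS g e"
      using inverse_semigroup_mult_idempotent[OF I g(1) ee] .
    moreover have fge: "f (mS g e) = y" using H g le unfolding idem_le_def by simp
    ultimately have "mS g e \<in> B" using \<open>y \<in> A\<close> unfolding B_def by simp
    moreover have "idem_le mS (mS g e) e" unfolding idem_le_def using ee by (simp add: AS)
    ultimately have "mS g e = e" using e_min by blast
    then show "y = f e" using fge by simp
  qed (fact \<open>f e \<in> A\<close>)
qed

theorem mainTheorem14:
  fixes mS :: "'a \<Rightarrow> 'a \<Rightarrow> 'a" and mT :: "'b \<Rightarrow> 'b \<Rightarrow> 'b" and f :: "'a \<Rightarrow> 'b"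
  assumes "semigroup mS" and "semigroup mT"
    and "\<forall>x y. f (mS x y) = mT (f x) (f y)"
    and "surj f"
    and "inverse_semigroup mS" and "idempotents_wf mS"
  shows "inverse_semigroup mT \<and> idempotents_wf mT"
proof -
  note hom = assms(3) and inv = assms(5)
  have regS: "regular_semigroup mS" using inv by (rule inverse_semigroup_imp_regular)
  have lift: "\<exists>g. mS g g = g \<and> f g = t" if "mT t t = t" for t
    using regular_semigroup_hom_lift_idempotent[OF regS hom] that \<open>surj f\<close> by (metis surjD)
  have "mT e g = mT g e" if "mT e e = e" and "mT g g = g" for e g
  proof -
    obtain e' where e': "mS e' e' = e'" "f e' = e" using lift \<open>mT e e = e\<close> by blast
    obtain g' where g': "mS g' g' = g'" "f g' = g" using lift \<open>mT g g = g\<close> by blast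
    from e' g' have "f (mS e' g') = f (mS g' e')"
      using inverse_semigroup_idempotents_commute[OF inv] by simp
    with hom \<open>f e' = e\<close> \<open>f g' = g\<close> show ?thesis by simp
  qed
  then have "inverse_semigroup mT"
    using regular_semigroup_commuting_idempotents_imp_inverse
      regular_semigroup_hom_image[OF regS assms(2) hom \<open>surj f\<close>] by blast
  moreover have "idempotents_wf mT"
    using idempotents_wf_hom_image[OF inv assms(6) hom lift] .
  ultimately show ?thesis ..
qed

end
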